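(* Let $\mathcal G$ be a finite connected groupoid and $\alpha=(S_g,\alpha_g)_{g\in\mathcal G}$ a unital group-type partial action of $\mathcal G$ on a commutative ring $S=\bigoplus_{y\in\mathcal G_0}S_y$, with $S_g=S1_g$ and $1_g\neq0$ for all $g$. Suppose $S$ is an $\alpha$-partial Galois extension of $R=S^{\alpha_{\mathcal G}}$. Let $\mathcal H\in\mathrm{wSub}_\alpha(\mathcal G)$ and $T=S^{\alpha_{\mathcal H}}$. Then (i) $T$ is $R$-separable and $\alpha$-strong, and (ii) $\mathcal G_T=\mathcal H$.
   Context: A groupoid is a small category with all morphisms invertible; $\mathcal G_0$ is its object set (identified with identity morphisms), $s(g),t(g)$ source and target, $\mathcal G(x,y)=\{g:s(g)=x,t(g)=y\}$, $\mathcal G(x)=\mathcal G(x,x)$; $gh$ defined iff $s(g)=t(h)$; connected means all $\mathcal G(x,y)\ne\emptyset$; connected components are full subgroupoids on classes of $x\sim y\iff\mathcal G(x,y)\neq\emptyset$; wide means containing all objects. A partial action $\alpha=(S_g,\alpha_g)_{g\in\mathcal G}$ on a ring $S$: for each $g$, $S_{t(g)}$ is an ideal of $S$, $S_g$ an ideal of $S_{t(g)}$, $\alpha_g:S_{g^{-1}}\to S_g$ a ring isomorphism; $\alpha_x=\mathrm{id}_{S_x}$; for composable $(g,h)$, $\alpha_h^{-1}(S_{g^{-1}}\cap S_h)\subseteq S_{(gh)^{-1}}$ and $\alpha_g\alpha_h(a)=\alpha_{gh}(a)$ there. Unital: $S_g=S1_g$, $1_g$ central idempotent. A partial action of a connected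 groupoid $\mathcal K$ on $A=\bigoplus_{y\in\mathcal K_0}A_y$ is group-type if there are $x\in\mathcal K_0$ and $\tau_y\in\mathcal K(x,y)$ ($\tau_x=x$) with $A_{\tau_y^{-1}}=A_x$, $A_{\tau_y}=A_y$ for all $y$; for non-connected $\mathcal K$, if each restriction to a connected component is group-type. For a subgroupoid $\mathcal H$, $\alpha_{\mathcal H}=(S_h,\alpha_h)_{h\in\mathcal H}$ acts on $\bigoplus_{z\in\mathcal H_0}S_z$; $\mathrm{wSub}_\alpha(\mathcal G)$ is the set of wide subgroupoids $\mathcal H$ with $\alpha_{\mathcal H}$ group-type. $S^{\alpha_{\mathcal K}}=\{a\in S:\alpha_k(a1_{k^{-1}})=a1_k\ \forall k\in\mathcal K\}$. $S$ is an $\alpha$-partial Galois extension of $R=S^{\alpha_{\mathcal G}}$ if there exist $m\ge1$, $a_i,b_i\in S$ with $\sum_{i=1}^m a_i\alpha_g(b_i1_{g^{-1}})=\delta_{z,g}1_z$ for all $z\in\mathcal G_0$, $g\in\mathcal G$ (i.e. $1_g$ if $g\in\mathcal G_0$, $0$ otherwise). For a subring $T$, $\mathcal G_T=\{g\in\mathcal G:\alpha_g(t1_{g^{-1}})=t1_g\ \forall t\in T\}$ and $\mathcal G(y)_{B}$ is defined likewise inside $\mathcal G(y)$ for $B\subseteq S_y$. $T$ is $R$-separable if the unital extension $R\subseteq T$ is separable (the multiplication $T\otimes_RT\to T$ splits as $T$-bimodules). For $y\in\mathcal G_0$, $T_y=T1_y$ is $\alpha_{\mathcal G(y,z)}$-strong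 if for any $g,h\in\mathcal G(y,z)$ with $g^{-1}h\notin\mathcal G(y)_{T_y}$ and any non-zero idempotent $e\in S_g\cup S_h$ there is $t_y\in T_y$ with $\alpha_g(t_y1_{g^{-1}})e\ne\alpha_h(t_y1_{h^{-1}})e$; $T$ is $\alpha$-strong if $T_y$ is $\alpha_{\mathcal G(y,z)}$-strong for all $y,z$. *)

theory Defs
  imports Main "HOL-Library.Poly_Mapping"
begin

section \<open>Groupoids (objects identified with identity morphisms)\<close>

record 'g groupoid =
  mor  :: "'g set"
  src  :: "'g \<Rightarrow> 'g"
  tgt  :: "'g \<Rightarrow> 'g"
  cmp  :: "'g \<Rightarrow> 'g \<Rightarrow> 'g"   (* cmp G g h = g h, defined iff src g = tgt h *)
  ginv :: "'g \<Rightarrow> 'g"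

definition objs :: "('g, 'm) groupoid_scheme \<Rightarrow> 'g set" where
  "objs G = {x \<in> mor G. src G x = x}"

definition hom :: "('g, 'm) groupoid_scheme \<Rightarrow> 'g \<Rightarrow> 'g \<Rightarrow> 'g set" where
  "hom G x y = {g \<in> mor G. src G g = x \<and> tgt G g = y}"

definition groupoid :: "('g, 'm) groupoid_scheme \<Rightarrow> bool" where
  "groupoid G \<longleftrightarrow>
    (\<forall>g\<in>mor G. src G g \<in> mor G \<and> tgt G g \<in> mor G \<and>
        src G (src G g) = src G g \<and> tgt G (src G g) = src G g \<and>
        src G (tgt G g) = tgt G g \<and> tgt G (tgt G g) = tgt G g) \<and>
    (\<forall>g\<in>mor G. \<forall>h\<in>mor G. src G g = tgt G h \<longrightarrow>
        cmp G g h \<in> mor G \<and> src G (cmp G g h) = src G h \<and> tgt G (cmp G g h) = tgt G g) \<and>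
    (\<forall>f\<in>mor G. \<forall>g\<in>mor G. \<forall>h\<in>mor G. src G f = tgt G g \<and> src G g = tgt G h \<longrightarrow>
        cmp G f (cmp G g h) = cmp G (cmp G f g) h) \<and>
    (\<forall>g\<in>mor G. cmp G (tgt G g) g = g \<and> cmp G g (src G g) = g) \<and>
    (\<forall>g\<in>mor G. ginv G g \<in> mor G \<and> src G (ginv G g) = tgt G g \<and> tgt G (ginv G g) = src G g \<and>
        cmp G (ginv G g) g = src G g \<and> cmp G g (ginv G g) = tgt G g)"

definition connected_groupoid :: "('g, 'm) groupoid_scheme \<Rightarrow> bool" where
  "connected_groupoid G \<longleftrightarrow> (\<forall>x\<in>objs G. \<forall>y\<in>objs G. hom G x y \<noteq> {})"

definition subgroupoid :: "'g set \<Rightarrow> ('g, 'm) groupoid_scheme \<Rightarrow> bool" where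
  "subgroupoid H G \<longleftrightarrow> H \<subseteq> mor G \<and>
    (\<forall>h\<in>H. src G h \<in> H \<and> tgt G h \<in> H \<and> ginv G h \<in> H) \<and>
    (\<forall>h\<in>H. \<forall>k\<in>H. src G h = tgt G k \<longrightarrow> cmp G h k \<in> H)"

definition wide :: "'g set \<Rightarrow> ('g, 'm) groupoid_scheme \<Rightarrow> bool" where
  "wide H G \<longleftrightarrow> objs G \<subseteq> H"

text \<open>The ideal S_g = S 1_g, where e g is the idempotent 1_g.\<close>
definition Sid :: "('g \<Rightarrow> 'a::comm_ring_1) \<Rightarrow> 'g \<Rightarrow> 'a set" where
  "Sid e g = {a * e g | a. True}"

definition unital_partial_action ::
  "('g, 'm) groupoid_scheme \<Rightarrow> ('g \<Rightarrow> 'a::comm_ring_1) \<Rightarrow> ('g \<Rightarrow> 'a \<Rightarrow> 'a) \<Rightarrow> bool" where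
  "unital_partial_action G e \<alpha> \<longleftrightarrow>
    (\<forall>g\<in>mor G. e g * e g = e g \<and> e g * e (tgt G g) = e g \<and>
       bij_betw (\<alpha> g) (Sid e (ginv G g)) (Sid e g) \<and>
       (\<forall>a\<in>Sid e (ginv G g). \<forall>b\<in>Sid e (ginv G g).
          \<alpha> g (a + b) = \<alpha> g a + \<alpha> g b \<and> \<alpha> g (a * b) = \<alpha> g a * \<alpha> g b)) \<and>
    (\<forall>x\<in>objs G. \<forall>a\<in>Sid e x. \<alpha> x a = a) \<and>
    (\<forall>g\<in>mor G. \<forall>h\<in>mor G. src G g = tgt G h \<longrightarrow>
       (\<forall>a\<in>Sid e (ginv G h). \<alpha> h a \<in> Sid e (ginv G g) \<inter> Sid e h \<longrightarrow>
          a \<in> Sid e (ginv G (cmp G g h)) \<and> \<alpha> g (\<alpha> h a) = \<alpha> (cmp G g h) a))"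

text \<open>S is the direct sum of the ideals S_y, y an object.\<close>
definition direct_sum_objs :: "('g, 'm) groupoid_scheme \<Rightarrow> ('g \<Rightarrow> 'a::comm_ring_1) \<Rightarrow> bool" where
  "direct_sum_objs G e \<longleftrightarrow>
    (\<forall>x\<in>objs G. \<forall>y\<in>objs G. x \<noteq> y \<longrightarrow> e x * e y = 0) \<and> (\<Sum>y\<in>objs G. e y) = 1"

text \<open>Group-type of the restriction of the action to the subgroupoid with morphism set H:
  the restriction to every connected component of H is group-type.\<close>
definition group_type :: "('g, 'm) groupoid_scheme \<Rightarrow> ('g \<Rightarrow> 'a::comm_ring_1) \<Rightarrow> 'g set \<Rightarrow> bool" where
  "group_type G e H \<longleftrightarrow>
    (\<forall>x0\<in>{x \<in> H. src G x = x}.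
       let C = {y. \<exists>h\<in>H. src G h = x0 \<and> tgt G h = y} in
       \<exists>x\<in>C. \<exists>\<tau>. \<tau> x = x \<and>
         (\<forall>y\<in>C. \<tau> y \<in> H \<and> src G (\<tau> y) = x \<and> tgt G (\<tau> y) = y \<and>
                 Sid e (ginv G (\<tau> y)) = Sid e x \<and> Sid e (\<tau> y) = Sid e y))"

definition wSub :: "('g, 'm) groupoid_scheme \<Rightarrow> ('g \<Rightarrow> 'a::comm_ring_1) \<Rightarrow> 'g set set" where
  "wSub G e = {H. subgroupoid H G \<and> wide H G \<and> group_type G e H}"

definition fixring :: "('g, 'm) groupoid_scheme \<Rightarrow> ('g \<Rightarrow> 'a::comm_ring_1) \<Rightarrow> ('g \<Rightarrow> 'a \<Rightarrow> 'a) \<Rightarrow> 'g set \<Rightarrow> 'a set" where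
  "fixring G e \<alpha> K = {a. \<forall>k\<in>K. \<alpha> k (a * e (ginv G k)) = a * e k}"

text \<open>Elements of K fixing every element of B (gives G_T and G(y)_B).\<close>
definition fixing :: "('g, 'm) groupoid_scheme \<Rightarrow> ('g \<Rightarrow> 'a::comm_ring_1) \<Rightarrow> ('g \<Rightarrow> 'a \<Rightarrow> 'a) \<Rightarrow> 'g set \<Rightarrow> 'a set \<Rightarrow> 'g set" where
  "fixing G e \<alpha> K B = {k \<in> K. \<forall>b\<in>B. \<alpha> k (b * e (ginv G k)) = b * e k}"

definition partial_galois :: "('g, 'm) groupoid_scheme \<Rightarrow> ('g \<Rightarrow> 'a::comm_ring_1) \<Rightarrow> ('g \<Rightarrow> 'a \<Rightarrow> 'a) \<Rightarrow> bool" where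
  "partial_galois G e \<alpha> \<longleftrightarrow>
    (\<exists>m::nat. m \<ge> 1 \<and> (\<exists>a b :: nat \<Rightarrow> 'a. \<forall>g\<in>mor G.
       (\<Sum>i<m. a i * \<alpha> g (b i * e (ginv G g))) = (if g \<in> objs G then e g else 0)))"

definition alpha_strong :: "('g, 'm) groupoid_scheme \<Rightarrow> ('g \<Rightarrow> 'a::comm_ring_1) \<Rightarrow> ('g \<Rightarrow> 'a \<Rightarrow> 'a) \<Rightarrow> 'a set \<Rightarrow> bool" where
  "alpha_strong G e \<alpha> T \<longleftrightarrow>
    (\<forall>y\<in>objs G. \<forall>z\<in>objs G. \<forall>g\<in>hom G y z. \<forall>h\<in>hom G y z.
       cmp G (ginv G g) h \<notin> fixing G e \<alpha> (hom G y y) {t * e y | t. t \<in> T} \<longrightarrow>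
       (\<forall>\<epsilon>. \<epsilon> * \<epsilon> = \<epsilon> \<and> \<epsilon> \<noteq> 0 \<and> \<epsilon> \<in> Sid e g \<union> Sid e h \<longrightarrow>
          (\<exists>ty\<in>{t * e y | t. t \<in> T}.
             \<alpha> g (ty * e (ginv G g)) * \<epsilon> \<noteq> \<alpha> h (ty * e (ginv G h)) * \<epsilon>)))"

text \<open>Free abelian group on pairs; T \<otimes>_R T is its quotient (restricted to T \<times> T)
  by the subgroup generated by the bilinearity / balancing relations.\<close>
type_synonym 'a ftens = "('a \<times> 'a) \<Rightarrow>\<^sub>0 int"

inductive_set tens_zero :: "'a::comm_ring_1 set \<Rightarrow> 'a set \<Rightarrow> 'a ftens set" for R T where
  tz0: "0 \<in> tens_zero R T"
| tzl: "x \<in> T \<Longrightarrow> x' \<in> T \<Longrightarrow> y \<in> T \<Longrightarrow>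
     Poly_Mapping.single (x + x', y) 1 - Poly_Mapping.single (x, y) 1 - Poly_Mapping.single (x', y) 1
       \<in> tens_zero R T"
| tzr: "x \<in> T \<Longrightarrow> y \<in> T \<Longrightarrow> y' \<in> T \<Longrightarrow>
     Poly_Mapping.single (x, y + y') 1 - Poly_Mapping.single (x, y) 1 - Poly_Mapping.single (x, y') 1
       \<in> tens_zero R T"
| tzb: "r \<in> R \<Longrightarrow> x \<in> T \<Longrightarrow> y \<in> T \<Longrightarrow>
     Poly_Mapping.single (r * x, y) 1 - Poly_Mapping.single (x, r * y) 1 \<in> tens_zero R T"
| tzd: "u \<in> tens_zero R T \<Longrightarrow> v \<in> tens_zero R T \<Longrightarrow> u - v \<in> tens_zero R T"

definition tens_eq :: "'a::comm_ring_1 set \<Rightarrow> 'a set \<Rightarrow> 'a ftens \<Rightarrow> 'a ftens \<Rightarrow> bool" where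
  "tens_eq R T u v \<longleftrightarrow> u - v \<in> tens_zero R T"

definition tens_mult :: "'a::comm_ring_1 ftens \<Rightarrow> 'a" where
  "tens_mult f = (\<Sum>p\<in>Poly_Mapping.keys f. of_int (Poly_Mapping.lookup f p) * (fst p * snd p))"

definition tens_lact :: "'a::comm_ring_1 \<Rightarrow> 'a ftens \<Rightarrow> 'a ftens" where
  "tens_lact t f = (\<Sum>p\<in>Poly_Mapping.keys f. Poly_Mapping.single (t * fst p, snd p) (Poly_Mapping.lookup f p))"

definition tens_ract :: "'a::comm_ring_1 ftens \<Rightarrow> 'a \<Rightarrow> 'a ftens" where
  "tens_ract f t = (\<Sum>p\<in>Poly_Mapping.keys f. Poly_Mapping.single (fst p, snd p * t) (Poly_Mapping.lookup f p))"

definition subring_of :: "'a::comm_ring_1 set \<Rightarrow> bool" where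
  "subring_of T \<longleftrightarrow> 1 \<in> T \<and> (\<forall>x\<in>T. \<forall>y\<in>T. x + y \<in> T \<and> x * y \<in> T \<and> - x \<in> T)"

text \<open>T is R-separable: R \<subseteq> T unital subrings and the multiplication map
  T \<otimes>_R T \<rightarrow> T has a T-bimodule section sigma.\<close>
definition separable_over :: "'a::comm_ring_1 set \<Rightarrow> 'a set \<Rightarrow> bool" where
  "separable_over R T \<longleftrightarrow> subring_of R \<and> subring_of T \<and> R \<subseteq> T \<and>
    (\<exists>\<sigma> :: 'a \<Rightarrow> 'a ftens. \<forall>t\<in>T.
       Poly_Mapping.keys (\<sigma> t) \<subseteq> T \<times> T \<and> tens_mult (\<sigma> t) = t \<and>
       (\<forall>u\<in>T. tens_eq R T (\<sigma> (t + u)) (\<sigma> t + \<sigma> u) \<and>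
               tens_eq R T (\<sigma> (t * u)) (tens_lact t (\<sigma> u)) \<and>
               tens_eq R T (\<sigma> (t * u)) (tens_ract (\<sigma> t) u)))"

end

theory Submission
  imports Defs
begin

text \<open>Write act g s for alpha_g(s 1_{g^-1}) and tr_K s for the sum of act k s over k in K,
  which is fixed by K. The Galois coordinates give the orthogonality relations
  sum_i act l (x_i) act k (y_i) = (if l = k then 1_l else 0), hence s = sum_i x_i tr_K(y_i s)
  for every wide subgroupoid K, and in particular 1 = sum_i x_i tr_H(y_i). Applying a morphism
  outside H to this identity, orthogonality kills every term; this gives both G_T = H and the
  strongness of T. A determinant-trick argument shows that tr_H maps onto T, say tr_H c = 1;
  then sum_i tr_H(c x_i) \<otimes> tr_H(y_i) is a separability idempotent of T over R, the dual
  coordinates t \<mapsto> tr_G(y_j t) taking values in R.\<close>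

locale groupoid_struct =
  fixes G :: "('g, 'm) groupoid_scheme"
  assumes is_groupoid: "groupoid G"
begin

lemma mor_src: "g \<in> mor G \<Longrightarrow> src G g \<in> mor G"
  and mor_tgt: "g \<in> mor G \<Longrightarrow> tgt G g \<in> mor G"
  and src_src [simp]: "g \<in> mor G \<Longrightarrow> src G (src G g) = src G g"
  and tgt_src [simp]: "g \<in> mor G \<Longrightarrow> tgt G (src G g) = src G g"
  and src_tgt [simp]: "g \<in> mor G \<Longrightarrow> src G (tgt G g) = tgt G g"
  and tgt_tgt [simp]: "g \<in> mor G \<Longrightarrow> tgt G (tgt G g) = tgt G g"
  using is_groupoid unfolding groupoid_def by blast+

lemma cmp_mor: "g \<in> mor G \<Longrightarrow> h \<in> mor G \<Longrightarrow> src G g = tgt G h \<Longrightarrow> cmp G g h \<in> mor G"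
  and src_cmp [simp]: "g \<in> mor G \<Longrightarrow> h \<in> mor G \<Longrightarrow> src G g = tgt G h \<Longrightarrow> src G (cmp G g h) = src G h"
  and tgt_cmp [simp]: "g \<in> mor G \<Longrightarrow> h \<in> mor G \<Longrightarrow> src G g = tgt G h \<Longrightarrow> tgt G (cmp G g h) = tgt G g"
  using is_groupoid unfolding groupoid_def by blast+

lemma cmp_assoc:
  assumes "f \<in> mor G" "g \<in> mor G" "h \<in> mor G" "src G f = tgt G g" "src G g = tgt G h"
  shows "cmp G (cmp G f g) h = cmp G f (cmp G g h)"
proof -
  have "\<forall>f\<in>mor G. \<forall>g\<in>mor G. \<forall>h\<in>mor G. src G f = tgt G g \<and> src G g = tgt G h \<longrightarrow>
      cmp G f (cmp G g h) = cmp G (cmp G f g) h"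
    using is_groupoid unfolding groupoid_def by blast
  then show ?thesis using assms by simp
qed

lemma cmp_tgt_left [simp]: "g \<in> mor G \<Longrightarrow> cmp G (tgt G g) g = g"
  and cmp_src_right [simp]: "g \<in> mor G \<Longrightarrow> cmp G g (src G g) = g"
  and inv_mor: "g \<in> mor G \<Longrightarrow> ginv G g \<in> mor G"
  and src_inv [simp]: "g \<in> mor G \<Longrightarrow> src G (ginv G g) = tgt G g"
  and tgt_inv [simp]: "g \<in> mor G \<Longrightarrow> tgt G (ginv G g) = src G g"
  and inv_cmp_self [simp]: "g \<in> mor G \<Longrightarrow> cmp G (ginv G g) g = src G g"
  and cmp_inv_self [simp]: "g \<in> mor G \<Longrightarrow> cmp G g (ginv G g) = tgt G g"
  using is_groupoid unfolding groupoid_def by blast+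

lemmas mors = mor_src mor_tgt cmp_mor inv_mor

lemma obj_mor: "z \<in> objs G \<Longrightarrow> z \<in> mor G"
  and obj_src: "z \<in> objs G \<Longrightarrow> src G z = z"
  unfolding objs_def by auto

lemma src_obj: "g \<in> mor G \<Longrightarrow> src G g \<in> objs G"
  and tgt_obj: "g \<in> mor G \<Longrightarrow> tgt G g \<in> objs G"
  unfolding objs_def by (auto simp: mor_src mor_tgt)

lemma inv_unique:
  assumes "k \<in> mor G" "f \<in> mor G" "src G k = tgt G f" "cmp G k f = src G f"
  shows "k = ginv G f"
proof -
  have "k = cmp G k (cmp G f (ginv G f))" using assms by (metis cmp_src_right cmp_inv_self)
  also have "\<dots> = cmp G (cmp G k f) (ginv G f)" using assms cmp_assoc[of k f "ginv G f"] by (simp add: inv_mor)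
  also have "\<dots> = ginv G f" using assms by (metis cmp_tgt_left inv_mor tgt_inv)
  finally show ?thesis .
qed

lemma inv_inv [simp]: "g \<in> mor G \<Longrightarrow> ginv G (ginv G g) = g"
  by (metis inv_mor cmp_inv_self inv_unique src_inv tgt_inv)

lemma inv_obj [simp]: "z \<in> objs G \<Longrightarrow> ginv G z = z"
  by (metis inv_unique obj_mor obj_src cmp_src_right tgt_src)

lemma inv_cmp_cancel_left:
  "g \<in> mor G \<Longrightarrow> h \<in> mor G \<Longrightarrow> src G g = tgt G h
    \<Longrightarrow> cmp G (ginv G g) (cmp G g h) = h"
  by (metis cmp_assoc cmp_tgt_left inv_cmp_self inv_mor src_inv)

lemma cmp_inv_cancel_left:
  "g \<in> mor G \<Longrightarrow> h \<in> mor G \<Longrightarrow> tgt G g = tgt G h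
    \<Longrightarrow> cmp G g (cmp G (ginv G g) h) = h"
  by (metis inv_cmp_cancel_left inv_inv inv_mor src_inv)

lemma cmp_inv_cancel_right:
  "g \<in> mor G \<Longrightarrow> h \<in> mor G \<Longrightarrow> src G g = tgt G h
    \<Longrightarrow> cmp G (cmp G g h) (ginv G h) = g"
  by (metis cmp_assoc cmp_inv_self cmp_src_right inv_mor tgt_inv)

lemma inv_cmp:
  assumes "g \<in> mor G" "h \<in> mor G" "src G g = tgt G h"
  shows "ginv G (cmp G g h) = cmp G (ginv G h) (ginv G g)"
proof -
  have "cmp G (cmp G (ginv G h) (ginv G g)) (cmp G g h) = cmp G (ginv G h) (cmp G (cmp G (ginv G g) g) h)"
    using assms by (metis cmp_assoc inv_cmp_cancel_left inv_cmp_self inv_mor src_inv tgt_inv src_cmp tgt_cmp cmp_mor cmp_tgt_left)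
  also have "\<dots> = src G h" using assms by simp
  finally have "cmp G (cmp G (ginv G h) (ginv G g)) (cmp G g h) = src G h" .
  then show ?thesis using assms
    by (intro inv_unique[symmetric]) (auto simp: mors)
qed

lemma inv_cmp_obj_iff:
  assumes "l \<in> mor G" "k \<in> mor G" "tgt G l = tgt G k"
  shows "cmp G (ginv G l) k \<in> objs G \<longleftrightarrow> l = k"
proof
  assume o: "cmp G (ginv G l) k \<in> objs G"
  have "cmp G (ginv G l) k = src G (cmp G (ginv G l) k)" using o obj_src by simp
  also have "\<dots> = src G k" using assms by (simp add: mors)
  finally have "ginv G l = ginv G k" using assms by (intro inv_unique) (auto simp: mors)
  then show "l = k" using assms by (metis inv_inv)
qed (use assms src_obj in simp)


lemma subgroupoid_mor: "subgroupoid (mor G) G"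
  unfolding subgroupoid_def using mors by blast

end

locale unital_action = groupoid_struct G for G :: "('g, 'm) groupoid_scheme" +
  fixes e :: "'g \<Rightarrow> 'a::comm_ring_1" and \<alpha> :: "'g \<Rightarrow> 'a \<Rightarrow> 'a"
  assumes unital: "unital_partial_action G e \<alpha>"
begin

lemma e_idem [simp]: "g \<in> mor G \<Longrightarrow> e g * e g = e g"
  and e_mult_e_tgt [simp]: "g \<in> mor G \<Longrightarrow> e g * e (tgt G g) = e g"
  and alpha_bij: "g \<in> mor G \<Longrightarrow> bij_betw (\<alpha> g) (Sid e (ginv G g)) (Sid e g)"
  and alpha_add: "g \<in> mor G \<Longrightarrow> a \<in> Sid e (ginv G g) \<Longrightarrow> b \<in> Sid e (ginv G g) \<Longrightarrow>
    \<alpha> g (a + b) = \<alpha> g a + \<alpha> g b"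
  and alpha_mult: "g \<in> mor G \<Longrightarrow> a \<in> Sid e (ginv G g) \<Longrightarrow> b \<in> Sid e (ginv G g) \<Longrightarrow>
    \<alpha> g (a * b) = \<alpha> g a * \<alpha> g b"
  and alpha_obj: "x \<in> objs G \<Longrightarrow> a \<in> Sid e x \<Longrightarrow> \<alpha> x a = a"
  using unital unfolding unital_partial_action_def by blast+

lemma e_idem_left [simp]: "g \<in> mor G \<Longrightarrow> e g * (e g * x) = e g * x"
  by (metis e_idem mult.assoc)

lemma alpha_cmp:
  "g \<in> mor G \<Longrightarrow> h \<in> mor G \<Longrightarrow> src G g = tgt G h \<Longrightarrow> a \<in> Sid e (ginv G h) \<Longrightarrow>
   \<alpha> h a \<in> Sid e (ginv G g) \<Longrightarrow> \<alpha> h a \<in> Sid e h \<Longrightarrow>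
   a \<in> Sid e (ginv G (cmp G g h)) \<and> \<alpha> g (\<alpha> h a) = \<alpha> (cmp G g h) a"
  using unital unfolding unital_partial_action_def by blast

lemma Sid_iff: "g \<in> mor G \<Longrightarrow> y \<in> Sid e g \<longleftrightarrow> y * e g = y"
  unfolding Sid_def by (auto simp: mult.assoc) metis

lemma e_inv_mult_e_src [simp]: "g \<in> mor G \<Longrightarrow> e (ginv G g) * e (src G g) = e (ginv G g)"
  using e_mult_e_tgt[of "ginv G g"] by (simp add: inv_mor)

lemma alpha_range: "g \<in> mor G \<Longrightarrow> a \<in> Sid e (ginv G g) \<Longrightarrow> \<alpha> g a \<in> Sid e g"
  by (rule bij_betw_apply[OF alpha_bij])

lemma alpha_zero: "g \<in> mor G \<Longrightarrow> \<alpha> g 0 = 0"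
  using alpha_add[of g 0 0] by (simp add: Sid_iff inv_mor)

lemma alpha_one: "g \<in> mor G \<Longrightarrow> \<alpha> g (e (ginv G g)) = e g"
proof -
  assume g: "g \<in> mor G"
  have "e g \<in> \<alpha> g ` Sid e (ginv G g)" using alpha_bij[OF g] g by (simp add: bij_betw_def Sid_iff)
  then obtain b where b: "b \<in> Sid e (ginv G g)" "\<alpha> g b = e g" by (metis imageE)
  have one: "e (ginv G g) \<in> Sid e (ginv G g)" using g by (simp add: Sid_iff inv_mor)
  have "\<alpha> g (e (ginv G g)) * e g = \<alpha> g (e (ginv G g) * b)"
    using alpha_mult[OF g one b(1)] b(2) by simp
  also have "e (ginv G g) * b = b" using b(1) g by (simp add: Sid_iff inv_mor mult.commute)
  finally have "\<alpha> g (e (ginv G g)) * e g = e g" using b by simp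
  moreover have "\<alpha> g (e (ginv G g)) * e g = \<alpha> g (e (ginv G g))"
    using alpha_range[OF g one] g by (simp add: Sid_iff)
  ultimately show ?thesis by simp
qed

lemma alpha_inv_alpha: "g \<in> mor G \<Longrightarrow> a \<in> Sid e (ginv G g) \<Longrightarrow> \<alpha> (ginv G g) (\<alpha> g a) = a"
proof -
  assume g: "g \<in> mor G" and a: "a \<in> Sid e (ginv G g)"
  have "\<alpha> (ginv G g) (\<alpha> g a) = \<alpha> (src G g) a"
    using alpha_cmp[of "ginv G g" g a] g a alpha_range[OF g a] by (simp add: inv_mor)
  also have "\<dots> = a"
  proof (rule alpha_obj)
    show "src G g \<in> objs G" using g by (rule src_obj)
    have "a * e (src G g) = a" using a g e_inv_mult_e_src[OF g] by (metis Sid_iff inv_mor mult.assoc)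
    then show "a \<in> Sid e (src G g)" using g by (simp add: Sid_iff mor_src)
  qed
  finally show ?thesis .
qed

lemma alpha_alpha_inv: "g \<in> mor G \<Longrightarrow> a \<in> Sid e g \<Longrightarrow> \<alpha> g (\<alpha> (ginv G g) a) = a"
  using alpha_inv_alpha[of "ginv G g" a] by (simp add: inv_mor)

lemma alpha_range_cmp:
  assumes g: "g \<in> mor G" and h: "h \<in> mor G" and gh: "src G g = tgt G h"
    and b: "b \<in> Sid e (ginv G h)" "b \<in> Sid e (ginv G (cmp G g h))"
  shows "\<alpha> h b \<in> Sid e (ginv G g)"
proof -
  have ghm: "cmp G g h \<in> mor G" using g h gh by (rule cmp_mor)
  define a where "a = \<alpha> (cmp G g h) b"
  have a: "a \<in> Sid e (cmp G g h)" unfolding a_def using alpha_range[OF ghm b(2)] .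
  have inv_a: "\<alpha> (ginv G (cmp G g h)) a = b" unfolding a_def using alpha_inv_alpha[OF ghm b(2)] .
  have hk: "cmp G h (ginv G (cmp G g h)) = ginv G g"
    using g h gh by (simp add: inv_cmp cmp_inv_cancel_left inv_mor)
  have "a \<in> Sid e (ginv G (ginv G g)) \<and> \<alpha> h b = \<alpha> (ginv G g) a"
    using alpha_cmp[OF h inv_mor[OF ghm], of a] a inv_a b hk g h gh by (simp add: ghm)
  then show ?thesis using alpha_range[OF inv_mor[OF g]] by simp
qed

lemma alpha_e_inv_cmp:
  assumes g: "g \<in> mor G" and h: "h \<in> mor G" and gh: "src G g = tgt G h"
  shows "\<alpha> h (e (ginv G h) * e (ginv G (cmp G g h))) = e h * e (ginv G g)"
proof -
  define k where "k = ginv G (cmp G g h)"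
  have km: "k \<in> mor G" unfolding k_def using g h gh by (simp add: mors)
  have hi: "ginv G h \<in> mor G" "ginv G g \<in> mor G" using g h by (auto intro: inv_mor)
  define f where "f = \<alpha> h (e (ginv G h) * e k)"
  have bS1: "e (ginv G h) * e k \<in> Sid e (ginv G h)" using hi km by (simp add: Sid_iff ac_simps)
  have bS2: "e (ginv G h) * e k \<in> Sid e k" using hi km by (simp add: Sid_iff ac_simps)
  have f1: "f * e (ginv G g) = f"
    using alpha_range_cmp[OF g h gh bS1] bS2 hi unfolding f_def k_def by (simp add: Sid_iff)
  have f2: "f * e h = f" using alpha_range[OF h bS1] h unfolding f_def by (simp add: Sid_iff)
  define y where "y = e h * e (ginv G g)"
  have yh: "y \<in> Sid e h" and yg: "y \<in> Sid e (ginv G g)"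
    unfolding y_def using h hi by (simp_all add: Sid_iff ac_simps)
  define b where "b = \<alpha> (ginv G h) y"
  have bS: "b \<in> Sid e (ginv G h)" unfolding b_def using alpha_range[OF hi(1)] yh h by simp
  have hb: "\<alpha> h b = y" unfolding b_def using alpha_alpha_inv[OF h yh] .
  have "b \<in> Sid e k" using alpha_cmp[OF g h gh bS] hb yh yg km unfolding k_def by simp
  then have "b * (e (ginv G h) * e k) = b" using bS hi km by (simp add: Sid_iff mult.assoc[symmetric])
  then have "y = y * f" unfolding f_def using alpha_mult[OF h bS bS1] hb by simp
  also have "\<dots> = f" unfolding y_def using f1 f2 by (metis mult.assoc mult.commute)
  finally show ?thesis unfolding f_def y_def k_def by simp
qed

definition act :: "'g \<Rightarrow> 'a \<Rightarrow> 'a" where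
  "act g x = \<alpha> g (x * e (ginv G g))"

lemma fixring_iff: "a \<in> fixring G e \<alpha> K \<longleftrightarrow> (\<forall>k\<in>K. act k a = a * e k)"
  unfolding fixring_def act_def by simp

lemma fixring_antimono: "K \<subseteq> L \<Longrightarrow> fixring G e \<alpha> L \<subseteq> fixring G e \<alpha> K"
  unfolding fixring_def by blast

lemma act_mult_e: "g \<in> mor G \<Longrightarrow> act g x * e g = act g x"
  unfolding act_def using alpha_range[of g "x * e (ginv G g)"] by (simp add: Sid_iff inv_mor mult.assoc)

lemma act_add: "g \<in> mor G \<Longrightarrow> act g (x + y) = act g x + act g y"
  unfolding act_def using alpha_add[of g "x * e (ginv G g)" "y * e (ginv G g)"]
  by (simp add: Sid_iff inv_mor mult.assoc distrib_right)

lemma act_mult: "g \<in> mor G \<Longrightarrow> act g (x * y) = act g x * act g y"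
proof -
  assume g: "g \<in> mor G"
  have "(x * e (ginv G g)) * (y * e (ginv G g)) = x * y * (e (ginv G g) * e (ginv G g))"
    by (simp add: ac_simps)
  then have "x * y * e (ginv G g) = (x * e (ginv G g)) * (y * e (ginv G g))"
    using g by (simp add: inv_mor)
  then show ?thesis unfolding act_def using alpha_mult[of g "x * e (ginv G g)" "y * e (ginv G g)"] g
    by (simp add: Sid_iff inv_mor mult.assoc)
qed

lemma act_zero [simp]: "g \<in> mor G \<Longrightarrow> act g 0 = 0"
  unfolding act_def by (simp add: alpha_zero)

lemma act_uminus: "g \<in> mor G \<Longrightarrow> act g (- x) = - act g x"
  using act_add[of g x "- x"] by (simp add: eq_neg_iff_add_eq_0 add.commute)

lemma act_sum: "g \<in> mor G \<Longrightarrow> act g (\<Sum>i\<in>A. f i) = (\<Sum>i\<in>A. act g (f i))"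
  by (induction A rule: infinite_finite_induct) (auto simp: act_add)

lemma act_one: "g \<in> mor G \<Longrightarrow> act g 1 = e g"
  unfolding act_def by (simp add: alpha_one)

lemma act_obj: "z \<in> objs G \<Longrightarrow> act z x = x * e z"
  unfolding act_def using alpha_obj[of z "x * e z"] obj_mor[of z] by (simp add: Sid_iff mult.assoc)

lemma act_mult_e_inv: "g \<in> mor G \<Longrightarrow> act g (x * e (ginv G g)) = act g x"
  unfolding act_def using inv_mor[of g] by (simp add: mult.assoc)

lemma act_mult_e_src: "g \<in> mor G \<Longrightarrow> act g (x * e (src G g)) = act g x"
  unfolding act_def using e_inv_mult_e_src[of g] by (simp add: mult.assoc mult.commute[of "e (src G g)"])

lemma act_cmp:
  assumes g: "g \<in> mor G" and h: "h \<in> mor G" and gh: "src G g = tgt G h"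
  shows "act g (act h x) = act (cmp G g h) x * e g"
proof -
  define k where "k = ginv G (cmp G g h)"
  have ghm: "cmp G g h \<in> mor G" using g h gh by (rule cmp_mor)
  have km: "k \<in> mor G" unfolding k_def using ghm by (rule inv_mor)
  have hi: "ginv G h \<in> mor G" "ginv G g \<in> mor G" using g h by (auto intro: inv_mor)
  define b where "b = x * e (ginv G h) * e k"
  have bS: "b \<in> Sid e (ginv G h)" unfolding b_def using hi
    by (simp add: Sid_iff) (metis e_idem mult.assoc mult.commute)
  have ebS: "e (ginv G h) * e k \<in> Sid e (ginv G h)" using hi by (simp add: Sid_iff ac_simps)
  have xS: "x * e (ginv G h) \<in> Sid e (ginv G h)" using hi by (simp add: Sid_iff ac_simps)
  have "act h x * e (ginv G g) = act h x * (e h * e (ginv G g))"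
    using act_mult_e[OF h] by (metis mult.assoc)
  also have "\<dots> = \<alpha> h (x * e (ginv G h)) * \<alpha> h (e (ginv G h) * e k)"
    unfolding act_def k_def using alpha_e_inv_cmp[OF g h gh] by simp
  also have "\<dots> = \<alpha> h b" unfolding b_def using alpha_mult[OF h xS ebS] hi by (simp add: ac_simps)
  finally have act_h: "act h x * e (ginv G g) = \<alpha> h b" .
  have r1: "\<alpha> h b \<in> Sid e (ginv G g)" using act_h[symmetric] hi by (simp add: Sid_iff mult.assoc)
  have r2: "\<alpha> h b \<in> Sid e h" using alpha_range[OF h bS] .
  have "act g (act h x) = \<alpha> g (\<alpha> h b)" using act_h by (simp add: act_def[of g])
  also have "\<dots> = \<alpha> (cmp G g h) b" using alpha_cmp[OF g h gh bS r1 r2] by simp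
  also have "\<dots> = \<alpha> (cmp G g h) ((x * e k) * (e k * e (ginv G h)))"
    unfolding b_def using km by (metis (no_types, lifting) e_idem mult.assoc mult.commute)
  also have "\<dots> = act (cmp G g h) x * \<alpha> (cmp G g h) (e k * e (ginv G h))"
  proof -
    have "x * e k \<in> Sid e (ginv G (cmp G g h))" using km k_def by (simp add: Sid_iff ac_simps)
    moreover have "e k * e (ginv G h) \<in> Sid e (ginv G (cmp G g h))"
      using km k_def by (simp add: Sid_iff ac_simps)
    ultimately show ?thesis using alpha_mult[OF ghm] by (simp add: act_def k_def)
  qed
  also have "\<alpha> (cmp G g h) (e k * e (ginv G h)) = e (cmp G g h) * e g"
    using alpha_e_inv_cmp[OF hi(2) ghm] g h gh inv_cmp_cancel_left[OF g h gh] by (simp add: k_def)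
  finally show ?thesis using act_mult_e[OF ghm] by (metis mult.assoc)
qed

lemma act_inv_act: "g \<in> mor G \<Longrightarrow> act (ginv G g) (act g x) = x * e (ginv G g)"
proof -
  assume g: "g \<in> mor G"
  have "act (ginv G g) (act g x) = act (src G g) x * e (ginv G g)"
    using act_cmp[of "ginv G g" g x] g by (simp add: inv_mor)
  also have "\<dots> = x * e (ginv G g)" using g act_obj[OF src_obj[OF g]] e_inv_mult_e_src[OF g]
    by (metis mult.assoc mult.commute)
  finally show ?thesis .
qed

lemma act_mult_right: "g \<in> mor G \<Longrightarrow> act g x * y = act g (x * act (ginv G g) y)"
proof -
  assume g: "g \<in> mor G"
  have "act g (act (ginv G g) y) = y * e g" using act_inv_act[OF inv_mor[OF g]] g by simp
  then have "act g (x * act (ginv G g) y) = act g x * (y * e g)" using act_mult[OF g] by simp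
  also have "\<dots> = act g x * y" using act_mult_e[OF g] by (metis mult.assoc mult.commute)
  finally show ?thesis by simp
qed

lemma fixring_subring:
  assumes K: "K \<subseteq> mor G"
  shows "subring_of (fixring G e \<alpha> K)"
proof -
  have "1 \<in> fixring G e \<alpha> K" using K by (auto simp: fixring_iff act_one)
  moreover have "a + b \<in> fixring G e \<alpha> K \<and> a * b \<in> fixring G e \<alpha> K \<and> - a \<in> fixring G e \<alpha> K"
    if a: "a \<in> fixring G e \<alpha> K" and b: "b \<in> fixring G e \<alpha> K" for a b
  proof -
    have "act k (a + b) = (a + b) * e k" "act k (a * b) = a * b * e k" "act k (- a) = - a * e k"
      if k: "k \<in> K" for k
    proof -
      have km: "k \<in> mor G" and ak: "act k a = a * e k" and bk: "act k b = b * e k"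
        using K k a b by (auto simp: fixring_iff)
      show "act k (a + b) = (a + b) * e k" using km ak bk by (simp add: act_add distrib_right)
      show "act k (- a) = - a * e k" using km ak by (simp add: act_uminus)
      have "act k (a * b) = a * b * (e k * e k)" using km ak bk by (simp add: act_mult ac_simps)
      then show "act k (a * b) = a * b * e k" using km by simp
    qed
    then show ?thesis by (simp add: fixring_iff)
  qed
  ultimately show ?thesis unfolding subring_of_def by blast
qed

end

locale finite_partial_action = unital_action G e \<alpha>
  for G :: "('g, 'm) groupoid_scheme" and e :: "'g \<Rightarrow> 'a::comm_ring_1" and \<alpha> +
  assumes direct_sum: "direct_sum_objs G e" and finite_mor: "finite (mor G)"
begin

lemma e_mult_e_tgt_ne:
  assumes g: "g \<in> mor G" and h: "h \<in> mor G" and ne: "tgt G g \<noteq> tgt G h"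
  shows "e g * e h = 0"
proof -
  have "e g * e h = e g * e h * (e (tgt G g) * e (tgt G h))"
    using g h by (metis e_mult_e_tgt mult.assoc mult.commute)
  also have "e (tgt G g) * e (tgt G h) = 0"
    using direct_sum ne g h tgt_obj unfolding direct_sum_objs_def by blast
  finally show ?thesis by simp
qed

lemma act_mult_act_tgt_ne:
  assumes g: "g \<in> mor G" and h: "h \<in> mor G" and ne: "tgt G g \<noteq> tgt G h"
  shows "act g u * act h v = 0"
proof -
  have "act g u * act h v = (act g u * e g) * (act h v * e h)"
    using act_mult_e[OF g, of u] act_mult_e[OF h, of v] by simp
  also have "\<dots> = (act g u * act h v) * (e g * e h)" by (simp add: ac_simps)
  finally show ?thesis using e_mult_e_tgt_ne[OF g h ne] by simp
qed

lemma act_mult_e_tgt_ne: "g \<in> mor G \<Longrightarrow> h \<in> mor G \<Longrightarrow> tgt G g \<noteq> tgt G h \<Longrightarrow> act g u * e h = 0"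
  using act_mult_act_tgt_ne[of g h u 1] by (simp add: act_one)

lemma act_act_not_composable:
  assumes g: "g \<in> mor G" and h: "h \<in> mor G" and ne: "src G g \<noteq> tgt G h"
  shows "act g (act h x) = 0"
proof -
  have "act h x * e (ginv G g) = act h x * (e h * e (ginv G g))"
    using act_mult_e[OF h] by (metis mult.assoc)
  also have "e h * e (ginv G g) = 0" using e_mult_e_tgt_ne[OF h inv_mor[OF g]] ne g by auto
  finally show ?thesis unfolding act_def using g by (simp add: alpha_zero)
qed

definition trace :: "'g set \<Rightarrow> 'a \<Rightarrow> 'a" where
  "trace K s = (\<Sum>h\<in>K. act h s)"

lemma trace_add: "K \<subseteq> mor G \<Longrightarrow> trace K (a + b) = trace K a + trace K b"
  unfolding trace_def by (simp add: sum.distrib act_add subset_iff)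

lemma trace_sum: "K \<subseteq> mor G \<Longrightarrow> trace K (\<Sum>i\<in>A. f i) = (\<Sum>i\<in>A. trace K (f i))"
proof -
  assume K: "K \<subseteq> mor G"
  have "trace K 0 = 0" unfolding trace_def using K by (auto intro!: sum.neutral)
  then show ?thesis by (induction A rule: infinite_finite_induct) (auto simp: trace_add[OF K])
qed

lemma trace_mult_fixed:
  assumes "K \<subseteq> mor G" "t \<in> fixring G e \<alpha> K"
  shows "trace K (t * s) = t * trace K s"
proof -
  have "act h (t * s) = t * act h s" if "h \<in> K" for h
  proof -
    have hm: "h \<in> mor G" using that assms by blast
    have "act h (t * s) = t * e h * act h s" using assms that hm by (simp add: act_mult fixring_iff)
    also have "\<dots> = t * act h s" using act_mult_e[OF hm, of s] by (simp add: ac_simps)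
    finally show ?thesis .
  qed
  then show ?thesis unfolding trace_def by (simp add: sum_distrib_left)
qed

lemma trace_fixed:
  assumes K: "subgroupoid K G"
  shows "trace K s \<in> fixring G e \<alpha> K"
  unfolding fixring_iff
proof
  fix k assume k: "k \<in> K"
  have Km: "K \<subseteq> mor G" using K unfolding subgroupoid_def by blast
  have finK: "finite K" using Km finite_mor finite_subset by blast
  have km: "k \<in> mor G" using k Km by blast
  have Kc: "\<And>h1 h2. h1 \<in> K \<Longrightarrow> h2 \<in> K \<Longrightarrow> src G h1 = tgt G h2 \<Longrightarrow> cmp G h1 h2 \<in> K"
    and Ki: "\<And>h. h \<in> K \<Longrightarrow> ginv G h \<in> K" using K unfolding subgroupoid_def by blast+
  have "act k (trace K s) = (\<Sum>h\<in>{h\<in>K. tgt G h = src G k}. act k (act h s))"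
    unfolding trace_def act_sum[OF km]
    by (rule sum.mono_neutral_right[OF finK]) (use Km km in \<open>auto intro!: act_act_not_composable\<close>)
  also have "\<dots> = (\<Sum>h\<in>{h\<in>K. tgt G h = src G k}. act (cmp G k h) s * e k)"
    by (rule sum.cong) (use Km km act_cmp in auto)
  also have "\<dots> = (\<Sum>h\<in>{h\<in>K. tgt G h = tgt G k}. act h s * e k)"
  proof (rule sum.reindex_bij_witness[where i = "cmp G (ginv G k)" and j = "cmp G k"])
    fix a assume a: "a \<in> {h \<in> K. tgt G h = tgt G k}"
    then have am: "a \<in> mor G" using Km by blast
    show "cmp G k (cmp G (ginv G k) a) = a" using cmp_inv_cancel_left[OF km am] a by simp
    show "cmp G (ginv G k) a \<in> {h \<in> K. tgt G h = src G k}"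
      using a am km Kc[OF Ki[OF k], of a] by (simp add: inv_mor)
  next
    fix a assume a: "a \<in> {h \<in> K. tgt G h = src G k}"
    then have am: "a \<in> mor G" using Km by blast
    show "cmp G (ginv G k) (cmp G k a) = a" using inv_cmp_cancel_left[OF km am] a by simp
    show "cmp G k a \<in> {h \<in> K. tgt G h = tgt G k}" using a am km Kc[OF k, of a] by simp
  qed simp
  also have "\<dots> = (\<Sum>h\<in>K. act h s * e k)"
    by (rule sum.mono_neutral_left[OF finK])
      (use Km km in \<open>auto intro!: act_mult_e_tgt_ne\<close>)
  also have "\<dots> = trace K s * e k" unfolding trace_def by (simp add: sum_distrib_right)
  finally show "act k (trace K s) = trace K s * e k" .
qed

end

locale galois_partial_action = finite_partial_action G e \<alpha>
  for G :: "('g, 'm) groupoid_scheme" and e :: "'g \<Rightarrow> 'a::comm_ring_1" and \<alpha> +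
  fixes m :: nat and x y :: "nat \<Rightarrow> 'a"
  assumes galois_coords:
    "\<And>g. g \<in> mor G \<Longrightarrow> (\<Sum>i<m. x i * act g (y i)) = (if g \<in> objs G then e g else 0)"
begin

lemma galois_coords_orthogonal:
  assumes l: "l \<in> mor G" and k: "k \<in> mor G"
  shows "(\<Sum>i<m. act l (x i) * act k (y i)) = (if l = k then e l else 0)"
proof (cases "tgt G l = tgt G k")
  case True
  define lk where "lk = cmp G (ginv G l) k"
  have li: "ginv G l \<in> mor G" using l by (rule inv_mor)
  have c: "src G (ginv G l) = tgt G k" using True l by simp
  have lk: "lk \<in> mor G" unfolding lk_def using cmp_mor[OF li k c] .
  have "(\<Sum>i<m. act l (x i) * act k (y i)) = (\<Sum>i<m. act l (x i * (act lk (y i) * e (ginv G l))))"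
    unfolding lk_def using act_mult_right[OF l] act_cmp[OF li k c] l by simp
  also have "\<dots> = act l ((\<Sum>i<m. x i * act lk (y i)) * e (ginv G l))"
    by (simp add: act_sum[OF l] sum_distrib_right mult.assoc)
  also have "\<dots> = act l ((if lk \<in> objs G then e lk else 0) * e (ginv G l))"
    using galois_coords[OF lk] by simp
  also have "\<dots> = act l (if l = k then e (src G l) else 0)"
    using inv_cmp_obj_iff[OF l k True] l k by (auto simp: lk_def act_mult_e_inv)
  also have "\<dots> = (if l = k then e l else 0)"
    using act_mult_e_src[OF l, of 1] l by (auto simp: act_one)
  finally show ?thesis .
next
  case False
  then show ?thesis using act_mult_act_tgt_ne[OF l k False] by auto
qed

lemma galois_trace_expansion:
  assumes K: "K \<subseteq> mor G" "objs G \<subseteq> K"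
  shows "(\<Sum>i<m. x i * trace K (y i * s)) = s"
proof -
  have finK: "finite K" using K finite_mor finite_subset by blast
  have "(\<Sum>i<m. x i * trace K (y i * s)) = (\<Sum>h\<in>K. (\<Sum>i<m. x i * act h (y i)) * act h s)"
    unfolding trace_def using K
    by (simp add: sum_distrib_left sum_distrib_right act_mult subset_iff ac_simps sum.swap[of _ K])
  also have "\<dots> = (\<Sum>h\<in>K. if h \<in> objs G then e h * act h s else 0)"
    by (rule sum.cong) (use K galois_coords in auto)
  also have "\<dots> = (\<Sum>h\<in>objs G. e h * s)"
    using K finK by (simp add: sum.If_cases Int_absorb1 act_obj ac_simps obj_mor)
  also have "\<dots> = s" using direct_sum unfolding direct_sum_objs_def by (simp add: sum_distrib_right[symmetric])
  finally show ?thesis .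
qed

end

lemma subring_add: "subring_of T \<Longrightarrow> a \<in> T \<Longrightarrow> b \<in> T \<Longrightarrow> a + b \<in> T"
  and subring_mult: "subring_of T \<Longrightarrow> a \<in> T \<Longrightarrow> b \<in> T \<Longrightarrow> a * b \<in> T"
  and subring_one: "subring_of T \<Longrightarrow> 1 \<in> T"
  unfolding subring_of_def by blast+

lemma subring_diff: "subring_of T \<Longrightarrow> a \<in> T \<Longrightarrow> b \<in> T \<Longrightarrow> a - b \<in> T"
  unfolding subring_of_def by (metis diff_conv_add_uminus)

lemma subring_zero: "subring_of T \<Longrightarrow> 0 \<in> T"
  using subring_diff subring_one by fastforce

lemma subring_sum: "subring_of T \<Longrightarrow> (\<And>i. i \<in> A \<Longrightarrow> f i \<in> T) \<Longrightarrow> (\<Sum>i\<in>A. f i) \<in> T"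
  by (induction A rule: infinite_finite_induct) (auto simp: subring_zero subring_add)

lemma determinant_trick:
  fixes v :: "nat \<Rightarrow> 'a::comm_ring_1"
  assumes T: "subring_of T" and IT: "I \<subseteq> T" and I0: "0 \<in> I"
    and I_add: "\<And>a b. a \<in> I \<Longrightarrow> b \<in> I \<Longrightarrow> a + b \<in> I"
    and I_mult: "\<And>a t. a \<in> I \<Longrightarrow> t \<in> T \<Longrightarrow> a * t \<in> I"
  shows "(\<And>k. k < n \<Longrightarrow> v k \<in> T) \<Longrightarrow> (\<And>k j. k < n \<Longrightarrow> j < n \<Longrightarrow> A k j \<in> I) \<Longrightarrow>
    (\<And>k. k < n \<Longrightarrow> v k = (\<Sum>j<n. A k j * v j)) \<Longrightarrow> \<exists>a\<in>I. \<forall>k<n. (1 - a) * v k = 0"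
proof (induction n arbitrary: v A)
  case 0
  then show ?case using I0 by auto
next
  case (Suc n)
  have AI: "\<And>k j. k \<le> n \<Longrightarrow> j \<le> n \<Longrightarrow> A k j \<in> I" using Suc.prems(2) by simp
  have IT': "\<And>a. a \<in> I \<Longrightarrow> a \<in> T" using IT by blast
  define c where "c = A n n"
  define u where "u = 1 - c"
  have cI: "c \<in> I" unfolding c_def using AI by simp
  have uT: "u \<in> T" unfolding u_def using subring_diff[OF T subring_one[OF T] IT'[OF cI]] .
  have v_split: "(\<Sum>j<n. A k j * v j) = v k - A k n * v n" if "k \<le> n" for k
    using Suc.prems(3)[of k] that by simp
  have row_n: "(\<Sum>j<n. A n j * v j) = u * v n"
    using v_split[of n] unfolding u_def c_def by (simp add: algebra_simps)
  \<comment> \<open>Eliminate \<open>v n\<close>: the \<open>u * v k\<close>, \<open>k < n\<close>, satisfy a system of the same shape.\<close>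
  define w where "w k = u * v k" for k
  define B where "B k j = A k j * u + A k n * A n j + (if j = k then c else 0)" for k j
  have "\<exists>b\<in>I. \<forall>k<n. (1 - b) * w k = 0"
  proof (rule Suc.IH[where A = B])
    show "w k \<in> T" if "k < n" for k using that Suc.prems(1) uT subring_mult[OF T] by (simp add: w_def)
    show "B k j \<in> I" if "k < n" "j < n" for k j
      unfolding B_def using that AI cI I0 uT IT' by (intro I_add I_mult) auto
    show "w k = (\<Sum>j<n. B k j * w j)" if k: "k < n" for k
    proof -
      have "(\<Sum>j<n. B k j * w j) =
          (\<Sum>j<n. (u * u) * (A k j * v j) + (A k n * u) * (A n j * v j) + (if j = k then c * w j else 0))"
        unfolding B_def w_def by (rule sum.cong) (auto simp: algebra_simps)
      also have "\<dots> = (u * u) * (\<Sum>j<n. A k j * v j) + (A k n * u) * (\<Sum>j<n. A n j * v j) + c * w k"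
        using k by (simp add: sum.distrib sum_distrib_left)
      also have "\<dots> = w k"
        using k unfolding v_split[OF less_imp_le[OF k]] row_n w_def u_def by (simp add: algebra_simps)
      finally show ?thesis by simp
    qed
  qed
  then obtain b where bI: "b \<in> I" and bw: "\<forall>k<n. (1 - b) * w k = 0" by blast
  define a where "a = 1 - (1 - b) * u * u"
  have "a = b + c * ((1 - b) * (1 + u))" unfolding a_def u_def by (simp add: algebra_simps)
  moreover have "(1 - b) * (1 + u) \<in> T"
    using subring_mult[OF T subring_diff[OF T subring_one[OF T] IT'[OF bI]] subring_add[OF T subring_one[OF T] uT]] .
  ultimately have aI: "a \<in> I" using I_add[OF bI I_mult[OF cI]] by simp
  have "(1 - a) * v k = 0" if "k < Suc n" for k
  proof (cases "k < n")
    case True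
    have "(1 - a) * v k = u * ((1 - b) * w k)" unfolding a_def w_def by (simp add: ac_simps)
    then show ?thesis using bw True by simp
  next
    case False
    then have "k = n" using that by simp
    have "(1 - a) * v n = (1 - b) * u * (\<Sum>j<n. A n j * v j)" unfolding a_def row_n by (simp add: ac_simps)
    also have "\<dots> = (\<Sum>j<n. A n j * ((1 - b) * w j))" unfolding w_def by (simp add: sum_distrib_left ac_simps)
    also have "\<dots> = 0" using bw by simp
    finally show ?thesis using \<open>k = n\<close> by simp
  qed
  then show ?case using aI by blast
qed

abbreviation tens :: "'a \<Rightarrow> 'a \<Rightarrow> 'a ftens" where
  "tens a b \<equiv> Poly_Mapping.single (a, b) 1"

lemma sum_keys_superset:
  fixes \<phi> :: "'k \<Rightarrow> int \<Rightarrow> 'b::comm_monoid_add"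
  assumes "finite A" "Poly_Mapping.keys f \<subseteq> A" "\<And>p. \<phi> p 0 = 0"
  shows "(\<Sum>p\<in>Poly_Mapping.keys f. \<phi> p (Poly_Mapping.lookup f p)) = (\<Sum>p\<in>A. \<phi> p (Poly_Mapping.lookup f p))"
  by (rule sum.mono_neutral_left) (use assms in \<open>auto simp: in_keys_iff\<close>)

lemma sum_keys_add:
  fixes \<phi> :: "'k \<Rightarrow> int \<Rightarrow> 'b::comm_monoid_add"
  assumes zero: "\<And>p. \<phi> p 0 = 0" and add: "\<And>p u v. \<phi> p (u + v) = \<phi> p u + \<phi> p v"
  shows "(\<Sum>p\<in>Poly_Mapping.keys (f + g). \<phi> p (Poly_Mapping.lookup (f + g) p)) =
         (\<Sum>p\<in>Poly_Mapping.keys f. \<phi> p (Poly_Mapping.lookup f p)) +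
         (\<Sum>p\<in>Poly_Mapping.keys g. \<phi> p (Poly_Mapping.lookup g p))"
proof -
  let ?A = "Poly_Mapping.keys f \<union> Poly_Mapping.keys g"
  have "(\<Sum>p\<in>Poly_Mapping.keys (f + g). \<phi> p (Poly_Mapping.lookup (f + g) p)) =
      (\<Sum>p\<in>?A. \<phi> p (Poly_Mapping.lookup (f + g) p))"
    by (rule sum_keys_superset[where \<phi> = \<phi>, OF _ keys_add zero]) simp
  also have "\<dots> = (\<Sum>p\<in>?A. \<phi> p (Poly_Mapping.lookup f p)) + (\<Sum>p\<in>?A. \<phi> p (Poly_Mapping.lookup g p))"
    by (simp add: lookup_add add sum.distrib)
  also have "\<dots> = (\<Sum>p\<in>Poly_Mapping.keys f. \<phi> p (Poly_Mapping.lookup f p)) +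
      (\<Sum>p\<in>Poly_Mapping.keys g. \<phi> p (Poly_Mapping.lookup g p))"
    using sum_keys_superset[of ?A f \<phi>] sum_keys_superset[of ?A g \<phi>] zero by simp
  finally show ?thesis .
qed

lemma tens_mult_add: "tens_mult (f + g) = tens_mult f + tens_mult g"
  unfolding tens_mult_def by (rule sum_keys_add) (auto simp: distrib_right)

lemma tens_lact_add: "tens_lact t (f + g) = tens_lact t f + tens_lact t g"
  unfolding tens_lact_def by (rule sum_keys_add) (auto simp: single_add)

lemma tens_ract_add: "tens_ract (f + g) t = tens_ract f t + tens_ract g t"
  unfolding tens_ract_def by (rule sum_keys_add) (auto simp: single_add)

lemma tens_mult_tens [simp]: "tens_mult (tens a b) = a * b"
  and tens_lact_tens [simp]: "tens_lact t (tens a b) = tens (t * a) b"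
  and tens_ract_tens [simp]: "tens_ract (tens a b) t = tens a (b * t)"
  and tens_mult_zero [simp]: "tens_mult 0 = 0"
  and tens_lact_zero [simp]: "tens_lact t 0 = 0"
  and tens_ract_zero [simp]: "tens_ract 0 t = 0"
  unfolding tens_mult_def tens_lact_def tens_ract_def by simp_all

lemma tens_mult_sum: "tens_mult (\<Sum>i\<in>A. f i) = (\<Sum>i\<in>A. tens_mult (f i))"
  by (induction A rule: infinite_finite_induct) (auto simp: tens_mult_add)

lemma tens_lact_sum: "tens_lact t (\<Sum>i\<in>A. f i) = (\<Sum>i\<in>A. tens_lact t (f i))"
  by (induction A rule: infinite_finite_induct) (auto simp: tens_lact_add)

lemma tens_ract_sum: "tens_ract (\<Sum>i\<in>A. f i) t = (\<Sum>i\<in>A. tens_ract (f i) t)"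
  by (induction A rule: infinite_finite_induct) (auto simp: tens_ract_add)

lemma tens_lact_diff: "tens_lact t (f - g) = tens_lact t f - tens_lact t g"
  using tens_lact_add[of t "f - g" g] by (simp add: eq_diff_eq)

lemma tens_zero_uminus: "u \<in> tens_zero R T \<Longrightarrow> - u \<in> tens_zero R T"
  using tzd[OF tz0, of u] by simp

lemma tens_zero_add: "u \<in> tens_zero R T \<Longrightarrow> v \<in> tens_zero R T \<Longrightarrow> u + v \<in> tens_zero R T"
  using tzd[OF _ tens_zero_uminus, of u R T v] by simp

lemma tens_zero_sum: "(\<And>i. i \<in> A \<Longrightarrow> f i \<in> tens_zero R T) \<Longrightarrow> (\<Sum>i\<in>A. f i) \<in> tens_zero R T"
  by (induction A rule: infinite_finite_induct) (auto intro: tz0 tens_zero_add)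

lemma tens_zero_lact:
  assumes T: "subring_of T" and t: "t \<in> T"
  shows "u \<in> tens_zero R T \<Longrightarrow> tens_lact t u \<in> tens_zero R T"
proof (induction rule: tens_zero.induct)
  case tz0
  then show ?case by (simp add: tens_lact_def tens_zero.tz0)
next
  case (tzl a a' b)
  then show ?case using tens_zero.tzl[of "t * a" T "t * a'" b R] subring_mult[OF T t]
    by (simp add: tens_lact_diff distrib_left)
next
  case (tzr a b b')
  then show ?case using tens_zero.tzr[of "t * a" T b b' R] subring_mult[OF T t]
    by (simp add: tens_lact_diff)
next
  case (tzb r a b)
  then show ?case using tens_zero.tzb[of r R "t * a" T b] subring_mult[OF T t]
    by (simp add: tens_lact_diff ac_simps)
next
  case (tzd u v)
  then show ?case by (simp add: tens_lact_diff tens_zero.tzd)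
qed

lemma tens_eq_sym: "tens_eq R T u v \<Longrightarrow> tens_eq R T v u"
  unfolding tens_eq_def using tens_zero_uminus by fastforce

lemma tens_eq_trans [trans]: "tens_eq R T u v \<Longrightarrow> tens_eq R T v w \<Longrightarrow> tens_eq R T u w"
  unfolding tens_eq_def using tens_zero_add by fastforce

lemma tens_eq_sum:
  "(\<And>i. i \<in> A \<Longrightarrow> tens_eq R T (f i) (g i)) \<Longrightarrow> tens_eq R T (\<Sum>i\<in>A. f i) (\<Sum>i\<in>A. g i)"
  unfolding tens_eq_def using tens_zero_sum[of A "\<lambda>i. f i - g i"] by (simp add: sum_subtractf)

lemma tens_zero_left: "subring_of T \<Longrightarrow> b \<in> T \<Longrightarrow> tens 0 b \<in> tens_zero R T"
  using tzl[of 0 T 0 b R] tens_zero_uminus subring_zero by fastforce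

lemma tens_zero_right: "subring_of T \<Longrightarrow> a \<in> T \<Longrightarrow> tens a 0 \<in> tens_zero R T"
  using tzr[of a T 0 0 R] tens_zero_uminus subring_zero by fastforce

lemma tens_sum_left:
  assumes T: "subring_of T" and b: "b \<in> T"
  shows "(\<And>j. j \<in> A \<Longrightarrow> u j \<in> T) \<Longrightarrow> tens_eq R T (tens (\<Sum>j\<in>A. u j) b) (\<Sum>j\<in>A. tens (u j) b)"
proof (induction A rule: infinite_finite_induct)
  case (insert z F)
  have "tens (u z + (\<Sum>j\<in>F. u j)) b - tens (u z) b - tens (\<Sum>j\<in>F. u j) b \<in> tens_zero R T"
    using insert subring_sum[OF T, of F u] b by (intro tzl) auto
  with insert have "(tens (u z + (\<Sum>j\<in>F. u j)) b - tens (u z) b - tens (\<Sum>j\<in>F. u j) b)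
     + (tens (\<Sum>j\<in>F. u j) b - (\<Sum>j\<in>F. tens (u j) b)) \<in> tens_zero R T"
    unfolding tens_eq_def by (intro tens_zero_add) auto
  then show ?case using insert unfolding tens_eq_def by (simp add: algebra_simps)
qed (use tens_zero_left[OF T b] in \<open>simp_all add: tens_eq_def\<close>)

lemma tens_sum_right:
  assumes T: "subring_of T" and a: "a \<in> T"
  shows "(\<And>j. j \<in> A \<Longrightarrow> u j \<in> T) \<Longrightarrow> tens_eq R T (tens a (\<Sum>j\<in>A. u j)) (\<Sum>j\<in>A. tens a (u j))"
proof (induction A rule: infinite_finite_induct)
  case (insert z F)
  have "tens a (u z + (\<Sum>j\<in>F. u j)) - tens a (u z) - tens a (\<Sum>j\<in>F. u j) \<in> tens_zero R T"
    using insert subring_sum[OF T, of F u] a by (intro tzr) auto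
  with insert have "(tens a (u z + (\<Sum>j\<in>F. u j)) - tens a (u z) - tens a (\<Sum>j\<in>F. u j))
     + (tens a (\<Sum>j\<in>F. u j) - (\<Sum>j\<in>F. tens a (u j))) \<in> tens_zero R T"
    unfolding tens_eq_def by (intro tens_zero_add) auto
  then show ?case using insert unfolding tens_eq_def by (simp add: algebra_simps)
qed (use tens_zero_right[OF T a] in \<open>simp_all add: tens_eq_def\<close>)

lemma tens_eq_central:
  fixes a b :: "nat \<Rightarrow> 'a::comm_ring_1" and r :: "nat \<Rightarrow> 'a \<Rightarrow> 'a"
  assumes T: "subring_of T" and RT: "R \<subseteq> T"
    and aT: "\<And>i. a i \<in> T" and bT: "\<And>i. b i \<in> T"
    and rR: "\<And>j t. t \<in> T \<Longrightarrow> r j t \<in> R"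
    and expand: "\<And>t. t \<in> T \<Longrightarrow> t = (\<Sum>j<m. a j * r j t)"
    and dual: "\<And>j t. t \<in> T \<Longrightarrow> (\<Sum>i<m. r j (t * a i) * b i) = b j * t"
    and s: "s \<in> T"
  shows "tens_eq R T (\<Sum>i<m. tens (s * a i) (b i)) (\<Sum>i<m. tens (a i) (b i * s))"
proof -
  have saT: "s * a i \<in> T" for i using subring_mult[OF T s aT] .
  have rT: "r j (s * a i) \<in> T" for i j using rR[OF saT] RT by blast
  have "tens_eq R T (\<Sum>i<m. tens (s * a i) (b i)) (\<Sum>i<m. \<Sum>j<m. tens (a j * r j (s * a i)) (b i))"
  proof (rule tens_eq_sum)
    fix i
    have "tens (s * a i) (b i) = tens (\<Sum>j<m. a j * r j (s * a i)) (b i)"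
      using expand[OF saT] by (rule arg_cong[where f = "\<lambda>z. tens z (b i)"])
    then show "tens_eq R T (tens (s * a i) (b i)) (\<Sum>j<m. tens (a j * r j (s * a i)) (b i))"
      using tens_sum_left[OF T bT, of "{..<m}" "\<lambda>j. a j * r j (s * a i)" R] subring_mult[OF T aT rT]
      by simp
  qed
  also have "tens_eq R T \<dots> (\<Sum>i<m. \<Sum>j<m. tens (a j) (r j (s * a i) * b i))"
  proof (intro tens_eq_sum)
    fix i j
    show "tens_eq R T (tens (a j * r j (s * a i)) (b i)) (tens (a j) (r j (s * a i) * b i))"
      using tzb[OF rR[OF saT] aT bT] unfolding tens_eq_def by (simp add: mult.commute)
  qed
  also have "(\<Sum>i<m. \<Sum>j<m. tens (a j) (r j (s * a i) * b i)) = (\<Sum>j<m. \<Sum>i<m. tens (a j) (r j (s * a i) * b i))"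
    by (rule sum.swap)
  also have "tens_eq R T \<dots> (\<Sum>j<m. tens (a j) (\<Sum>i<m. r j (s * a i) * b i))"
  proof (rule tens_eq_sum)
    fix j
    have "tens_eq R T (tens (a j) (\<Sum>i<m. r j (s * a i) * b i)) (\<Sum>i<m. tens (a j) (r j (s * a i) * b i))"
      using tens_sum_right[OF T aT, of "{..<m}" "\<lambda>i. r j (s * a i) * b i" R] subring_mult[OF T rT bT]
      by simp
    then show "tens_eq R T (\<Sum>i<m. tens (a j) (r j (s * a i) * b i)) (tens (a j) (\<Sum>i<m. r j (s * a i) * b i))"
      by (rule tens_eq_sym)
  qed
  also have "(\<Sum>j<m. tens (a j) (\<Sum>i<m. r j (s * a i) * b i)) = (\<Sum>j<m. tens (a j) (b j * s))"
    using dual[OF s] by simp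
  finally show ?thesis .
qed

lemma separable_overI:
  fixes a b :: "nat \<Rightarrow> 'a::comm_ring_1" and r :: "nat \<Rightarrow> 'a \<Rightarrow> 'a"
  assumes R: "subring_of R" and T: "subring_of T" and RT: "R \<subseteq> T"
    and aT: "\<And>i. a i \<in> T" and bT: "\<And>i. b i \<in> T"
    and one: "(\<Sum>i<m. a i * b i) = 1"
    and rR: "\<And>j t. t \<in> T \<Longrightarrow> r j t \<in> R"
    and expand: "\<And>t. t \<in> T \<Longrightarrow> t = (\<Sum>j<m. a j * r j t)"
    and dual: "\<And>j t. t \<in> T \<Longrightarrow> (\<Sum>i<m. r j (t * a i) * b i) = b j * t"
  shows "separable_over R T"
  unfolding separable_over_def
proof (intro conjI R T RT exI[of _ "\<lambda>t. \<Sum>i<m. tens (t * a i) (b i)"] ballI)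
  fix t u assume t: "t \<in> T" and u: "u \<in> T"
  show "Poly_Mapping.keys (\<Sum>i<m. tens (t * a i) (b i)) \<subseteq> T \<times> T"
    using keys_sum[of "\<lambda>i. tens (t * a i) (b i)" "{..<m}"] subring_mult[OF T t aT] bT by auto
  show "tens_mult (\<Sum>i<m. tens (t * a i) (b i)) = t"
    using one by (simp add: tens_mult_sum sum_distrib_left[symmetric] mult.assoc)
  have "(\<Sum>i<m. tens ((t + u) * a i) (b i)) - ((\<Sum>i<m. tens (t * a i) (b i)) + (\<Sum>i<m. tens (u * a i) (b i)))
     = (\<Sum>i<m. tens (t * a i + u * a i) (b i) - tens (t * a i) (b i) - tens (u * a i) (b i))"
    by (simp add: sum_subtractf sum.distrib algebra_simps)
  also have "\<dots> \<in> tens_zero R T"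
    by (rule tens_zero_sum, rule tzl) (use subring_mult[OF T t aT] subring_mult[OF T u aT] bT in auto)
  finally show "tens_eq R T (\<Sum>i<m. tens ((t + u) * a i) (b i))
      ((\<Sum>i<m. tens (t * a i) (b i)) + (\<Sum>i<m. tens (u * a i) (b i)))"
    unfolding tens_eq_def .
  show "tens_eq R T (\<Sum>i<m. tens (t * u * a i) (b i)) (tens_lact t (\<Sum>i<m. tens (u * a i) (b i)))"
    unfolding tens_eq_def by (simp add: tens_lact_sum mult.assoc tz0)
  have "tens_lact t ((\<Sum>i<m. tens (u * a i) (b i)) - (\<Sum>i<m. tens (a i) (b i * u))) \<in> tens_zero R T"
    using tens_zero_lact[OF T t] tens_eq_central[OF T RT aT bT rR expand dual u] unfolding tens_eq_def by blast
  then show "tens_eq R T (\<Sum>i<m. tens (t * u * a i) (b i)) (tens_ract (\<Sum>i<m. tens (t * a i) (b i)) u)"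
    unfolding tens_eq_def by (simp add: tens_lact_diff tens_lact_sum tens_ract_sum mult.assoc)
qed

locale galois_wide_subgroupoid = galois_partial_action G e \<alpha> m x y
  for G :: "('g, 'm) groupoid_scheme" and e :: "'g \<Rightarrow> 'a::comm_ring_1" and \<alpha> m x y +
  fixes H :: "'g set"
  assumes subgroupoid_H: "subgroupoid H G" and wide_H: "wide H G"
begin

abbreviation T where "T \<equiv> fixring G e \<alpha> H"
abbreviation R where "R \<equiv> fixring G e \<alpha> (mor G)"

lemma H_mor: "H \<subseteq> mor G"
  and H_cmp: "h \<in> H \<Longrightarrow> k \<in> H \<Longrightarrow> src G h = tgt G k \<Longrightarrow> cmp G h k \<in> H"
  and H_inv: "h \<in> H \<Longrightarrow> ginv G h \<in> H"
  using subgroupoid_H unfolding subgroupoid_def by blast+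

lemma objs_H: "objs G \<subseteq> H"
  using wide_H unfolding wide_def .

lemma trace_H_fixed: "trace H s \<in> T"
  by (rule trace_fixed[OF subgroupoid_H])

lemma trace_mor_fixed: "trace (mor G) s \<in> R"
  by (rule trace_fixed[OF subgroupoid_mor])

lemma galois_trace_one: "(\<Sum>i<m. x i * trace H (y i)) = 1"
  using galois_trace_expansion[OF H_mor objs_H, of 1] by simp

lemma sum_act_mult_trace_not_in:
  assumes l: "l \<in> mor G" and nH: "l \<notin> H"
  shows "(\<Sum>i<m. act l (x i) * trace H (y i)) = 0"
proof -
  have "(\<Sum>i<m. act l (x i) * trace H (y i)) = (\<Sum>k\<in>H. \<Sum>i<m. act l (x i) * act k (y i))"
    unfolding trace_def by (simp add: sum_distrib_left sum.swap[of _ H])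
  also have "\<dots> = 0"
    using galois_coords_orthogonal[OF l] H_mor nH by (intro sum.neutral) auto
  finally show ?thesis .
qed

lemma fixing_fixring:
  assumes nonzero: "\<forall>g\<in>mor G. e g \<noteq> 0"
  shows "fixing G e \<alpha> (mor G) T = H"
proof
  show "H \<subseteq> fixing G e \<alpha> (mor G) T"
    using H_mor unfolding fixing_def fixring_def by auto
  show "fixing G e \<alpha> (mor G) T \<subseteq> H"
  proof
    fix \<sigma> assume "\<sigma> \<in> fixing G e \<alpha> (mor G) T"
    then have \<sigma>: "\<sigma> \<in> mor G" and fixed: "\<And>t. t \<in> T \<Longrightarrow> act \<sigma> t = t * e \<sigma>"
      unfolding fixing_def act_def by auto
    show "\<sigma> \<in> H"
    proof (rule ccontr)
      assume nH: "\<sigma> \<notin> H"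
      have "e \<sigma> = act \<sigma> (\<Sum>i<m. x i * trace H (y i))" using galois_trace_one act_one[OF \<sigma>] by simp
      also have "\<dots> = (\<Sum>i<m. act \<sigma> (x i) * trace H (y i)) * e \<sigma>"
        by (simp add: act_sum[OF \<sigma>] act_mult[OF \<sigma>] fixed trace_H_fixed sum_distrib_right mult.assoc)
      also have "\<dots> = 0" using sum_act_mult_trace_not_in[OF \<sigma> nH] by simp
      finally show False using nonzero \<sigma> by simp
    qed
  qed
qed

lemma fixring_separates:
  assumes g: "g \<in> mor G" and h: "h \<in> mor G" and tgt: "tgt G g = tgt G h"
    and nH: "cmp G (ginv G h) g \<notin> H" and \<epsilon>: "\<epsilon> \<in> Sid e g"
    and agree: "\<And>t. t \<in> T \<Longrightarrow> act g t * \<epsilon> = act h t * \<epsilon>"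
  shows "\<epsilon> = 0"
proof -
  define l where "l = cmp G (ginv G h) g"
  have hg: "src G (ginv G h) = tgt G g" using h tgt by simp
  have l: "l \<in> mor G" unfolding l_def using cmp_mor[OF inv_mor[OF h] g hg] .
  have "\<epsilon> = act g (\<Sum>i<m. x i * trace H (y i)) * \<epsilon>"
    using \<epsilon> g galois_trace_one by (simp add: act_one Sid_iff mult.commute)
  also have "\<dots> = (\<Sum>i<m. act g (x i) * (act h (trace H (y i)) * \<epsilon>))"
    by (simp add: act_sum[OF g] act_mult[OF g] sum_distrib_right mult.assoc agree trace_H_fixed)
  also have "\<dots> = act h ((\<Sum>i<m. act l (x i) * trace H (y i)) * e (ginv G h)) * \<epsilon>"
  proof -
    have "act g (x i) * act h s = act h (act l (x i) * s * e (ginv G h))" for i s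
      using act_mult_right[OF h, of s "act g (x i)"] act_cmp[OF inv_mor[OF h] g hg] h
      by (simp add: l_def ac_simps)
    then show ?thesis
      by (simp add: act_sum[OF h] sum_distrib_right mult.assoc[symmetric])
  qed
  also have "\<dots> = 0" using sum_act_mult_trace_not_in[OF l] nH h by (simp add: l_def)
  finally show ?thesis .
qed


lemma alpha_strong_fixring: "alpha_strong G e \<alpha> T"
  unfolding alpha_strong_def
proof (intro ballI impI allI)
  fix y0 z g h \<epsilon>
  assume "y0 \<in> objs G" "z \<in> objs G" "g \<in> hom G y0 z" "h \<in> hom G y0 z"
    and not_fixing: "cmp G (ginv G g) h \<notin> fixing G e \<alpha> (hom G y0 y0) {t * e y0 |t. t \<in> T}"
    and \<epsilon>: "\<epsilon> * \<epsilon> = \<epsilon> \<and> \<epsilon> \<noteq> 0 \<and> \<epsilon> \<in> Sid e g \<union> Sid e h"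
  then have g: "g \<in> mor G" "src G g = y0" "tgt G g = z"
    and h: "h \<in> mor G" "src G h = y0" "tgt G h = z"
    unfolding hom_def by auto
  define \<rho> where "\<rho> = cmp G (ginv G g) h"
  have gh: "src G (ginv G g) = tgt G h" using g h by simp
  have \<rho>: "\<rho> \<in> hom G y0 y0"
    unfolding \<rho>_def hom_def using cmp_mor[OF inv_mor[OF g(1)] h(1) gh] g h gh by (simp add: inv_mor)
  have \<rho>_nH: "\<rho> \<notin> H"
  proof
    assume "\<rho> \<in> H"
    then have "\<alpha> \<rho> (t * e y0 * e (ginv G \<rho>)) = t * e y0 * e \<rho>" if "t \<in> T" for t
      using that \<rho> act_mult_e_src[of \<rho> t] e_mult_e_tgt[of \<rho>]
      by (auto simp: hom_def fixring_iff act_def ac_simps)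
    then have "\<rho> \<in> fixing G e \<alpha> (hom G y0 y0) {t * e y0 |t. t \<in> T}"
      unfolding fixing_def using \<rho> by blast
    then show False using not_fixing \<rho>_def by simp
  qed
  have \<rho>_inv_nH: "cmp G (ginv G h) g \<notin> H"
    using \<rho>_nH H_inv[of "cmp G (ginv G h) g"] inv_cmp[OF inv_mor[OF h(1)] g(1)] g h
    by (auto simp: \<rho>_def)
  show "\<exists>ty\<in>{t * e y0 |t. t \<in> T}. \<alpha> g (ty * e (ginv G g)) * \<epsilon> \<noteq> \<alpha> h (ty * e (ginv G h)) * \<epsilon>"
  proof (rule ccontr)
    assume "\<not> ?thesis"
    then have agree: "act g t * \<epsilon> = act h t * \<epsilon>" if "t \<in> T" for t
      using that act_mult_e_src[OF g(1), of t] act_mult_e_src[OF h(1), of t] g h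
      unfolding act_def by auto
    have "\<epsilon> = 0"
    proof (cases "\<epsilon> \<in> Sid e g")
      case True
      then show ?thesis using fixring_separates[OF g(1) h(1) _ \<rho>_inv_nH] agree g h by auto
    next
      case False
      then show ?thesis
        using fixring_separates[OF h(1) g(1) _ \<rho>_nH[unfolded \<rho>_def]] agree \<epsilon> g h by auto
    qed
    then show False using \<epsilon> by simp
  qed
qed

lemma trace_expansion: "trace H s = (\<Sum>j<m. trace H (y j * s) * trace H (x j))"
proof -
  have "trace H s = trace H (\<Sum>j<m. x j * trace H (y j * s))"
    using galois_trace_expansion[OF H_mor objs_H, of s] by simp
  also have "\<dots> = (\<Sum>j<m. trace H (trace H (y j * s) * x j))"
    by (simp add: trace_sum[OF H_mor] ac_simps)
  also have "\<dots> = (\<Sum>j<m. trace H (y j * s) * trace H (x j))"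
    by (simp add: trace_mult_fixed[OF H_mor trace_H_fixed])
  finally show ?thesis .
qed

lemma trace_surj: "\<exists>c. trace H c = 1"
proof -
  \<comment> \<open>Nakayama for the ideal \<open>tr\<^sub>H(S)\<close> of \<open>T\<close> and the generators \<open>tr\<^sub>H(x\<^sub>k)\<close>.\<close>
  define I where "I = range (trace H)"
  have I_T: "I \<subseteq> T" unfolding I_def using trace_H_fixed by blast
  have "trace H 0 = 0" unfolding trace_def using H_mor by (auto intro!: sum.neutral)
  then have I_0: "0 \<in> I" unfolding I_def by (metis rangeI)
  have I_add: "a + b \<in> I" if ab: "a \<in> I" "b \<in> I" for a b
  proof -
    obtain s1 s2 where "a = trace H s1" "b = trace H s2" using ab unfolding I_def by blast
    then have "a + b = trace H (s1 + s2)" using trace_add[OF H_mor] by simp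
    then show ?thesis unfolding I_def by simp
  qed
  have I_mult: "a * t \<in> I" if at: "a \<in> I" "t \<in> T" for a t
  proof -
    obtain s where "a = trace H s" using at unfolding I_def by blast
    then have "a * t = trace H (t * s)" using trace_mult_fixed[OF H_mor at(2)] by (simp add: mult.commute)
    then show ?thesis unfolding I_def by simp
  qed
  obtain a where aI: "a \<in> I" and a: "\<forall>k<m. (1 - a) * trace H (x k) = 0"
  proof (rule bexE[OF determinant_trick[OF fixring_subring[OF H_mor] I_T I_0 I_add I_mult]])
    show "trace H (x k) \<in> T" for k using trace_H_fixed .
    show "trace H (y j * x k) \<in> I" for k j unfolding I_def by simp
    show "trace H (x k) = (\<Sum>j<m. trace H (y j * x k) * trace H (x j))" for k by (rule trace_expansion)
  qed
  have "1 - a = (1 - a) * (\<Sum>i<m. x i * trace H (y i))" using galois_trace_one by simp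
  also have "\<dots> = (\<Sum>i<m. x i * ((1 - a) * trace H (y i)))" by (simp add: sum_distrib_left ac_simps)
  also have "\<dots> = (\<Sum>i<m. x i * (\<Sum>j<m. trace H (y j * y i) * ((1 - a) * trace H (x j))))"
    by (subst trace_expansion) (simp add: sum_distrib_left ac_simps)
  also have "\<dots> = 0" using a by simp
  finally show ?thesis using aI unfolding I_def by auto
qed


lemma sum_sep_coords:
  assumes c: "trace H c = 1"
  shows "(\<Sum>i<m. trace H (c * x i) * trace H (y i)) = 1"
proof -
  have "(\<Sum>i<m. trace H (c * x i) * trace H (y i)) = (\<Sum>i<m. trace H (trace H (y i) * (c * x i)))"
    using trace_mult_fixed[OF H_mor trace_H_fixed] by (simp add: mult.commute)
  also have "\<dots> = trace H (c * (\<Sum>i<m. x i * trace H (y i)))"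
    by (simp add: trace_sum[OF H_mor] sum_distrib_left ac_simps)
  finally show ?thesis using galois_trace_one c by simp
qed

lemma sep_coords_expand:
  assumes c: "trace H c = 1" and t: "t \<in> T"
  shows "t = (\<Sum>j<m. trace H (c * x j) * trace (mor G) (y j * t))"
proof -
  have RT: "trace (mor G) s \<in> T" for s
    using trace_mor_fixed fixring_antimono[OF H_mor] by blast
  have "(\<Sum>j<m. trace H (c * x j) * trace (mor G) (y j * t)) =
      (\<Sum>j<m. trace H (trace (mor G) (y j * t) * (c * x j)))"
    using trace_mult_fixed[OF H_mor RT] by (simp add: mult.commute)
  also have "\<dots> = trace H (c * (\<Sum>j<m. x j * trace (mor G) (y j * t)))"
    by (simp add: trace_sum[OF H_mor] sum_distrib_left ac_simps)
  also have "(\<Sum>j<m. x j * trace (mor G) (y j * t)) = t"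
    using galois_trace_expansion[of "mor G" t] obj_mor by blast
  also have "trace H (c * t) = t" using trace_mult_fixed[OF H_mor t, of c] c by (simp add: mult.commute)
  finally show ?thesis by simp
qed

lemma sum_act_sep_coords:
  assumes c: "trace H c = 1" and g: "g \<in> mor G"
  shows "(\<Sum>i<m. act g (trace H (c * x i)) * trace H (y i)) = (if g \<in> H then e g else 0)"
proof (cases "g \<in> H")
  case True
  then have "(\<Sum>i<m. act g (trace H (c * x i)) * trace H (y i)) =
      e g * (\<Sum>i<m. trace H (c * x i) * trace H (y i))"
    using trace_H_fixed by (simp add: fixring_iff sum_distrib_left ac_simps)
  then show ?thesis using sum_sep_coords[OF c] True by simp
next
  case False
  have "(\<Sum>i<m. act g (act h (c * x i)) * trace H (y i)) = 0" if h: "h \<in> H" for h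
  proof (cases "src G g = tgt G h")
    case True
    have hm: "h \<in> mor G" using h H_mor by blast
    have gh: "cmp G g h \<notin> H"
    proof
      assume "cmp G g h \<in> H"
      then have "cmp G (cmp G g h) (ginv G h) \<in> H" using H_cmp H_inv h g hm True by simp
      then show False using False cmp_inv_cancel_right[OF g hm True] by simp
    qed
    have "(\<Sum>i<m. act g (act h (c * x i)) * trace H (y i)) =
        act (cmp G g h) c * e g * (\<Sum>i<m. act (cmp G g h) (x i) * trace H (y i))"
      using act_cmp[OF g hm True] act_mult[OF cmp_mor[OF g hm True]]
      by (simp add: sum_distrib_left ac_simps)
    then show ?thesis using sum_act_mult_trace_not_in[OF cmp_mor[OF g hm True] gh] by simp
  next
    case False
    then show ?thesis using act_act_not_composable[OF g _ False] h H_mor by auto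
  qed
  then have "(\<Sum>i<m. act g (trace H (c * x i)) * trace H (y i)) = 0"
    unfolding trace_def[of H "c * x _"]
    by (simp add: act_sum[OF g] sum_distrib_right sum.swap[of _ H])
  then show ?thesis using False by simp
qed

lemma sep_coords_dual:
  assumes c: "trace H c = 1" and t: "t \<in> T"
  shows "(\<Sum>i<m. trace (mor G) (y j * (t * trace H (c * x i))) * trace H (y i)) = trace H (y j) * t"
proof -
  have "(\<Sum>i<m. trace (mor G) (y j * (t * trace H (c * x i))) * trace H (y i)) =
      (\<Sum>g\<in>mor G. act g (y j * t) * (\<Sum>i<m. act g (trace H (c * x i)) * trace H (y i)))"
    unfolding trace_def[of "mor G"]
    by (simp add: act_mult sum_distrib_left sum_distrib_right sum.swap[of _ "mor G"] ac_simps)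
  also have "\<dots> = (\<Sum>g\<in>mor G. if g \<in> H then act g (y j * t) else 0)"
    by (rule sum.cong) (auto simp: sum_act_sep_coords[OF c] act_mult_e)
  also have "\<dots> = (\<Sum>g\<in>H. act g (y j * t))"
    using H_mor finite_mor by (simp add: sum.If_cases Int_absorb1)
  also have "\<dots> = trace H (y j) * t"
    unfolding trace_def[symmetric] using trace_mult_fixed[OF H_mor t, of "y j"] by (simp add: mult.commute)
  finally show ?thesis .
qed

lemma separable_fixring: "separable_over R T"
proof -
  obtain c where c: "trace H c = 1" using trace_surj by blast
  show ?thesis
  proof (rule separable_overI[where r = "\<lambda>j t. trace (mor G) (y j * t)"])
    show "subring_of R" using fixring_subring by simp
    show "subring_of T" using fixring_subring[OF H_mor] .
    show "R \<subseteq> T" by (rule fixring_antimono[OF H_mor])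
  qed (use trace_H_fixed trace_mor_fixed sum_sep_coords[OF c] sep_coords_expand[OF c]
      sep_coords_dual[OF c] in auto)
qed

end

theorem proposition5p5:
  fixes G :: "'g groupoid" and e :: "'g \<Rightarrow> 'a::comm_ring_1" and \<alpha> :: "'g \<Rightarrow> 'a \<Rightarrow> 'a"
    and H :: "'g set"
  assumes "groupoid G" and "finite (mor G)" and "connected_groupoid G"
    and "unital_partial_action G e \<alpha>" and "group_type G e (mor G)"
    and "direct_sum_objs G e"
    and "\<forall>g\<in>mor G. e g \<noteq> 0"
    and "partial_galois G e \<alpha>"
    and "H \<in> wSub G e"
  shows "separable_over (fixring G e \<alpha> (mor G)) (fixring G e \<alpha> H)
       \<and> alpha_strong G e \<alpha> (fixring G e \<alpha> H)
       \<and> fixing G e \<alpha> (mor G) (fixring G e \<alpha> H) = H"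
proof -
  interpret finite_partial_action G e \<alpha>
    by unfold_locales (use assms in auto)
  obtain m :: nat and x y where
    "\<forall>g\<in>mor G. (\<Sum>i<m. x i * \<alpha> g (y i * e (ginv G g))) = (if g \<in> objs G then e g else 0)"
    using assms(8) unfolding partial_galois_def by blast
  then interpret galois_wide_subgroupoid G e \<alpha> m x y H
    by unfold_locales (use assms(9) in \<open>auto simp: act_def wSub_def\<close>)
  show ?thesis using separable_fixring alpha_strong_fixring fixing_fixring assms(7) by blast
qed

end
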